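(* Let $k\ge 2$ and $n\ge 2$, and run Protocol 2 on $n$ nodes with one node initially in state $L_0$ and all others in state $F$. Then Protocol 2 stably constructs the graph language $\mathscr{T}_k=\{G : G \text{ is a rooted tree and every node } u \text{ has } \Delta^+(u)\le k\}$, and under the uniform random scheduler it stabilises to a spanning tree in $\mathscr{T}_k$ within $O(\log n)$ parallel time with high probability.
   Context: Network constructor model: there are $n$ nodes and every pair of nodes may interact. Each node has a state from a finite set $Q$; each of the $n(n-1)/2$ node pairs carries an edge state in $\{0,1\}$ (inactive/active), all initially $0$. At each discrete step the uniform random scheduler picks an unordered pair $\{u,v\}$ uniformly at random among all $n(n-1)/2$ pairs, independently of the past, and the two nodes and their edge are updated by the transition function (applicable with either ordering of the pair); any triple not listed as a rule is left unchanged. All states are output states, so the output graph of a configuration is the graph on all nodes whose edges are the active edges. An execution stabilises to $G$ if from some step on the output graph is always (isomorphic to) $G$; running time is the first such step, and parallel time is the number of steps divided by $n$. A protocol stably constructs a graph language $\mathscr{G}$ if every fair execution stabilises to a graph in $\mathscr{G}$ and every $G\in\mathscr{G}$ is the stabilised output of some execution on $|V(G)|$ nodes (an infinite execution is fair if whenever a configuration $C$ occurs infinitely often, every configuration reachable from $C$ in one step occurs infinitely often). "With high probability" means with probability at least $1-n^{-a}$ for an arbitrarily chosen constant $a>0$. Protocol 2 ($k$-Slot protocol): $Q=\{F,L_0,\dots,L_k,O_0,\dots,O_k\}$, rules $(L_x,F,0)\to(L_{x+1},O_0,1)$ for $x<k$ and $(O_y,F,0)\to(O_{y+1},O_0,1)$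 for $y<k$. When a rule fires, the node moving from $F$ to $O_0$ becomes a child of the other node; the leader is the root; $\Delta^+(u)$ is the number of children of $u$. *)

theory Defs
  imports "HOL-Probability.Probability"
begin

datatype st = Free | Lead nat | Occ nat

text \<open>A configuration: node states (nodes are naturals, only 0..<n used) and
  edge states on unordered pairs (True = active).\<close>
type_synonym cfg = "(nat \<Rightarrow> st) \<times> (nat set \<Rightarrow> bool)"

fun rule :: "nat \<Rightarrow> st \<Rightarrow> st \<Rightarrow> bool \<Rightarrow> (st \<times> st \<times> bool) option" where
  "rule k (Lead x) Free False = (if x < k then Some (Lead (Suc x), Occ 0, True) else None)"
| "rule k (Occ y) Free False = (if y < k then Some (Occ (Suc y), Occ 0, True) else None)"
| "rule k _ _ _ = None"

definition delta :: "nat \<Rightarrow> cfg \<Rightarrow> nat \<Rightarrow> nat \<Rightarrow> cfg" where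
  "delta k c u v =
     (let s = fst c; E = snd c in
      case rule k (s u) (s v) (E {u, v}) of
        Some (a, b, x) \<Rightarrow> (s(u := a, v := b), E({u, v} := x))
      | None \<Rightarrow>
        (case rule k (s v) (s u) (E {u, v}) of
           Some (a, b, x) \<Rightarrow> (s(v := a, u := b), E({u, v} := x))
         | None \<Rightarrow> c))"

definition step :: "nat \<Rightarrow> cfg \<Rightarrow> nat set \<Rightarrow> cfg" where
  "step k c e = delta k c (Min e) (Max e)"

definition pairs :: "nat \<Rightarrow> nat set set" where
  "pairs n = {e. \<exists>u v. u < n \<and> v < n \<and> u \<noteq> v \<and> e = {u, v}}"

definition init :: "nat \<Rightarrow> cfg" where
  "init l = ((\<lambda>u. if u = l then Lead 0 else Free), (\<lambda>e. False))"

definition out :: "cfg \<Rightarrow> nat set set" where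
  "out c = {e. snd c e}"

definition iso :: "nat \<Rightarrow> nat set set \<Rightarrow> nat set set \<Rightarrow> bool" where
  "iso n E1 E2 \<longleftrightarrow> (\<exists>f. bij_betw f {..<n} {..<n} \<and>
      (\<forall>u<n. \<forall>v<n. {u, v} \<in> E1 \<longleftrightarrow> {f u, f v} \<in> E2))"

definition in_Tk :: "nat \<Rightarrow> nat \<Rightarrow> nat set set \<Rightarrow> bool" where
  "in_Tk n k E \<longleftrightarrow> E \<subseteq> pairs n \<and>
     (\<exists>r<n. \<exists>p :: nat \<Rightarrow> nat.
        (\<forall>v<n. v \<noteq> r \<longrightarrow> p v < n \<and> p v \<noteq> v) \<and>
        E = {{v, p v} | v. v < n \<and> v \<noteq> r} \<and>
        (\<forall>v<n. \<exists>m. (p ^^ m) v = r) \<and>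
        (\<forall>u<n. card {v. v < n \<and> v \<noteq> r \<and> p v = u} \<le> k))"

definition execution :: "nat \<Rightarrow> nat \<Rightarrow> nat \<Rightarrow> (nat \<Rightarrow> cfg) \<Rightarrow> bool" where
  "execution n k l C \<longleftrightarrow> C 0 = init l \<and> (\<forall>t. \<exists>e\<in>pairs n. C (Suc t) = step k (C t) e)"

definition fair :: "nat \<Rightarrow> nat \<Rightarrow> (nat \<Rightarrow> cfg) \<Rightarrow> bool" where
  "fair n k C \<longleftrightarrow> (\<forall>c. infinite {t. C t = c} \<longrightarrow>
       (\<forall>e\<in>pairs n. infinite {t. C t = step k c e}))"

definition stable_from :: "nat \<Rightarrow> (nat \<Rightarrow> cfg) \<Rightarrow> nat set set \<Rightarrow> nat \<Rightarrow> bool" where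
  "stable_from n C G T \<longleftrightarrow> (\<forall>t\<ge>T. iso n (out (C t)) G)"

definition stabilises_to :: "nat \<Rightarrow> (nat \<Rightarrow> cfg) \<Rightarrow> nat set set \<Rightarrow> bool" where
  "stabilises_to n C G \<longleftrightarrow> (\<exists>T. stable_from n C G T)"

definition sched :: "nat \<Rightarrow> nat set stream measure" where
  "sched n = stream_space (measure_pmf (pmf_of_set (pairs n)))"

primrec run :: "nat \<Rightarrow> nat \<Rightarrow> nat set stream \<Rightarrow> nat \<Rightarrow> cfg" where
  "run k l s 0 = init l"
| "run k l s (Suc t) = step k (run k l s t) (s !! t)"

end

theory Submission
  imports Defs
begin

text \<open>The attached nodes (the leader and the nodes in states \<open>O_y\<close>) always form a tree rooted at
  the leader in which every counter equals the number of children and the active edges are the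
  parent edges; an interaction changes something exactly when it attaches a free node to an
  attached node with a free slot. Since \<open>k \<ge> 2\<close>, more than half of the attached nodes have a free
  slot, so with \<open>r\<close> free nodes at least \<open>(n - r + 1) r / 2\<close> of the pairs attach a node.
  Under fairness the number of free nodes eventually stops decreasing, which forces it to be
  zero; conversely, every tree in \<open>T_k\<close> is built by attaching its nodes in order of depth after
  relabelling its root as the leader. Under the uniform scheduler a potential
  \<open>\<Prod>i=1..r. 1/(1 - n/(4(n-i)i))\<close>, which is at most \<open>e n\<close> by the harmonic sum, contracts in
  expectation by \<open>1 - 1/(8n)\<close> per step, so after \<open>O(n log n)\<close> steps all nodes are attached with probability
  \<open>1 - n\<^sup>-\<^sup>a\<close>.\<close>

section \<open>Tree configurations\<close>

definition child_count :: "(nat \<Rightarrow> nat) \<Rightarrow> nat set \<Rightarrow> nat \<Rightarrow> nat" where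
  "child_count p S u = card {w\<in>S. p w = u}"

definition tree_cfg :: "nat \<Rightarrow> (nat \<Rightarrow> nat) \<Rightarrow> nat set \<Rightarrow> cfg" where
  "tree_cfg l p S =
     ((\<lambda>u. if u = l then Lead (child_count p S u)
           else if u \<in> S then Occ (child_count p S u) else Free),
      (\<lambda>e. \<exists>w\<in>S. e = {w, p w}))"

text \<open>The rank \<open>d\<close> strictly decreases towards the root, so the parent pointers are acyclic.\<close>
definition attached_tree :: "nat \<Rightarrow> nat \<Rightarrow> nat \<Rightarrow> (nat \<Rightarrow> nat) \<Rightarrow> nat set \<Rightarrow> (nat \<Rightarrow> nat) \<Rightarrow> bool" where
  "attached_tree n k l p S d \<longleftrightarrow> S \<subseteq> {..<n} \<and> l \<notin> S \<and> l < n \<and>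
     (\<forall>v\<in>S. p v = l \<or> (p v \<in> S \<and> d (p v) < d v)) \<and> (\<forall>u. child_count p S u \<le> k)"

definition tree_shaped :: "nat \<Rightarrow> nat \<Rightarrow> nat \<Rightarrow> cfg \<Rightarrow> bool" where
  "tree_shaped n k l c \<longleftrightarrow> (\<exists>S p d. c = tree_cfg l p S \<and> attached_tree n k l p S d)"

definition all_attached :: "nat \<Rightarrow> cfg \<Rightarrow> bool" where
  "all_attached n c \<longleftrightarrow> (\<forall>u<n. fst c u \<noteq> Free)"

definition free_count :: "nat \<Rightarrow> cfg \<Rightarrow> nat" where
  "free_count n c = card {u. u < n \<and> fst c u = Free}"

lemma rule_eq_SomeD:
  "rule k q1 q2 E = Some r \<Longrightarrow> q2 = Free \<and> \<not> E \<and> (\<exists>j<k. q1 = Lead j \<or> q1 = Occ j)"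
  by (cases q1; cases q2; cases E) (auto split: if_splits)

lemma rule_eq_Some_not_Free: "rule k q1 q2 E = Some (a, b, x) \<Longrightarrow> a \<noteq> Free \<and> b \<noteq> Free"
  by (cases q1; cases q2; cases E) (auto split: if_splits)

lemma delta_eq_self:
  assumes "rule k (fst c u) (fst c v) (snd c {u, v}) = None"
    and "rule k (fst c v) (fst c u) (snd c {u, v}) = None"
  shows "delta k c u v = c"
  using assms unfolding delta_def by (simp add: Let_def)

lemma delta_Free_before:
  assumes "fst (delta k c u v) w = Free"
  shows "fst c w = Free"
proof -
  obtain s E where c: "c = (s, E)" by (cases c)
  show ?thesis
  proof (cases "rule k (s u) (s v) (E {u, v})")
    case None
    show ?thesis
    proof (cases "rule k (s v) (s u) (E {u, v})")
      case None2: None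
      then show ?thesis using assms None c unfolding delta_def by (simp add: Let_def)
    next
      case (Some r)
      obtain a b x where r: "r = (a, b, x)" by (cases r)
      have "a \<noteq> Free" "b \<noteq> Free" using rule_eq_Some_not_Free Some r by blast+
      then show ?thesis using assms None Some r c unfolding delta_def
        by (simp add: Let_def split: if_splits)
    qed
  next
    case (Some r)
    obtain a b x where r: "r = (a, b, x)" by (cases r)
    have "a \<noteq> Free" "b \<noteq> Free" using rule_eq_Some_not_Free Some r by blast+
    then show ?thesis using assms Some r c unfolding delta_def
      by (simp add: Let_def split: if_splits)
  qed
qed

lemma step_Free_before: "fst (step k c e) w = Free \<Longrightarrow> fst c w = Free"
  unfolding step_def by (rule delta_Free_before)

lemma all_attached_step: "all_attached n c \<Longrightarrow> all_attached n (step k c e)"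
  unfolding all_attached_def using step_Free_before by blast

lemma free_count_step_le: "free_count n (step k c e) \<le> free_count n c"
  unfolding free_count_def by (rule card_mono) (auto dest: step_Free_before)

lemma all_attached_iff_free_count: "all_attached n c \<longleftrightarrow> free_count n c = 0"
proof -
  have "finite {u. u < n \<and> fst c u = Free}" by simp
  then show ?thesis unfolding all_attached_def free_count_def card_0_eq[OF \<open>finite _\<close>] by blast
qed

lemma step_all_attached:
  assumes attached: "all_attached n c" and e: "e \<in> pairs n"
  shows "step k c e = c"
proof -
  obtain a b where ab: "a < n" "b < n" "e = {a, b}" using e unfolding pairs_def by blast
  have idle: "rule k (fst c x) (fst c y) E = None" if "y < n" for x y E
  proof (rule ccontr)
    assume "rule k (fst c x) (fst c y) E \<noteq> None"
    then have "fst c y = Free" using rule_eq_SomeD by blast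
    then show False using attached that unfolding all_attached_def by blast
  qed
  have "delta k c (min a b) (max a b) = c"
    using ab by (intro delta_eq_self idle) auto
  moreover have "Min {a, b} = min a b" "Max {a, b} = max a b" by auto
  ultimately show ?thesis unfolding step_def ab(3) by simp
qed

lemma child_count_insert:
  assumes "finite S" "v \<notin> S"
  shows "child_count p (insert v S) w = child_count p S w + (if p v = w then 1 else 0)"
proof -
  have "{x\<in>insert v S. p x = w} = (if p v = w then insert v {x\<in>S. p x = w} else {x\<in>S. p x = w})"
    by auto
  then show ?thesis using assms by (simp add: child_count_def)
qed

lemma child_count_fun_upd: "y \<notin> S \<Longrightarrow> child_count (p(y := x)) S = child_count p S"
  unfolding child_count_def by (intro ext arg_cong[where f = card]) auto

lemma tree_cfg_fun_upd: "y \<notin> S \<Longrightarrow> tree_cfg l (p(y := x)) S = tree_cfg l p S"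
  unfolding tree_cfg_def child_count_fun_upd by (auto intro!: ext)

lemma tree_cfg_empty: "tree_cfg l p {} = init l"
  unfolding init_def tree_cfg_def child_count_def by auto

lemma out_tree_cfg: "out (tree_cfg l p S) = {{w, p w} | w. w \<in> S}"
  unfolding out_def tree_cfg_def by auto

lemma tree_cfg_Free_iff: "fst (tree_cfg l p S) y = Free \<longleftrightarrow> y \<notin> insert l S"
  unfolding tree_cfg_def by auto

lemma tree_cfg_counterD:
  "fst (tree_cfg l p S) y = Lead j \<or> fst (tree_cfg l p S) y = Occ j \<Longrightarrow>
     y \<in> insert l S \<and> j = child_count p S y"
  unfolding tree_cfg_def by (auto split: if_splits)

lemma free_count_tree_cfg: "free_count n (tree_cfg l p S) = card ({..<n} - insert l S)"
  unfolding free_count_def tree_cfg_Free_iff by (rule arg_cong[where f = card]) auto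

lemma step_tree_cfg_attach:
  assumes fin: "finite S" and vS: "v \<notin> S" and vl: "v \<noteq> l" and pv: "p v \<in> insert l S"
    and pvv: "p v \<noteq> v" and nochild: "\<forall>w\<in>S. p w \<noteq> v" and slot: "child_count p S (p v) < k"
  shows "step k (tree_cfg l p S) {v, p v} = tree_cfg l p (insert v S)"
proof -
  define u where "u = p v"
  define s where "s = fst (tree_cfg l p S)"
  define E where "E = snd (tree_cfg l p S)"
  have Euv: "\<not> E {v, u}" "\<not> E {u, v}"
    using nochild vS unfolding E_def tree_cfg_def u_def by (auto simp: doubleton_eq_iff)
  have sv: "s v = Free" using vS vl unfolding s_def tree_cfg_def by auto
  define A where "A = (if u = l then Lead (Suc (child_count p S u)) else Occ (Suc (child_count p S u)))"
  have fires: "rule k (s u) (s v) (E {u, v}) = Some (A, Occ 0, True)"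
    using pv slot sv Euv unfolding s_def A_def u_def[symmetric] by (auto simp: tree_cfg_def)
  have idle: "rule k (s v) (s u) x = None" for x using sv by simp
  have new_count: "child_count p (insert v S) w = child_count p S w + (if u = w then 1 else 0)" for w
    using child_count_insert[OF fin vS] u_def by simp
  have "{w\<in>S. p w = v} = {}" using nochild by auto
  then have "child_count p S v = 0" unfolding child_count_def by (metis card.empty)
  then have "fst (tree_cfg l p (insert v S)) w = (s(u := A, v := Occ 0)) w" for w
    unfolding tree_cfg_def s_def A_def using vl pvv u_def new_count pv by auto
  moreover have "snd (tree_cfg l p (insert v S)) e = (E({v, u} := True)) e" for e
    unfolding tree_cfg_def E_def using u_def by auto
  ultimately have target: "tree_cfg l p (insert v S) = (s(u := A, v := Occ 0), E({v, u} := True))"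
    by (simp add: prod_eq_iff fun_eq_iff)
  have "step k (tree_cfg l p S) {v, u} = (s(u := A, v := Occ 0), E({v, u} := True))"
  proof (cases "v < u")
    case True
    then have "Min {v, u} = v" "Max {v, u} = u" by auto
    then show ?thesis unfolding step_def delta_def s_def[symmetric] E_def[symmetric]
      using fires idle by (simp add: Let_def insert_commute)
  next
    case False
    then have "Min {v, u} = u" "Max {v, u} = v" using pvv u_def by auto
    then show ?thesis unfolding step_def delta_def s_def[symmetric] E_def[symmetric]
      using fires idle pvv u_def by (simp add: Let_def insert_commute fun_upd_twist)
  qed
  then show ?thesis using target u_def by simp
qed

lemma attached_tree_finite: "attached_tree n k l p S d \<Longrightarrow> finite S"
  unfolding attached_tree_def using finite_subset by blast

lemma attached_tree_parent: "attached_tree n k l p S d \<Longrightarrow> v \<in> S \<Longrightarrow> p v \<in> insert l S \<and> p v \<noteq> v"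
  unfolding attached_tree_def by fastforce

lemma attached_tree_attach:
  assumes tree: "attached_tree n k l p S d" and x: "x \<in> insert l S"
    and y: "y \<notin> insert l S" "y < n" and slot: "child_count p S x < k"
  shows "step k (tree_cfg l p S) {x, y} = tree_cfg l (p(y := x)) (insert y S)"
    and "attached_tree n k l (p(y := x)) (insert y S) (d(y := Suc (d x)))"
proof -
  define p' where "p' = p(y := x)"
  have fin: "finite S" using attached_tree_finite[OF tree] .
  have yS: "y \<notin> S" "y \<noteq> l" using y by auto
  have parent_not_y: "p v \<noteq> y" if "v \<in> S" for v
    using attached_tree_parent[OF tree that] y by auto
  then have nochild: "\<forall>w\<in>S. p' w \<noteq> y" using yS unfolding p'_def by auto
  have "step k (tree_cfg l p' S) {y, p' y} = tree_cfg l p' (insert y S)"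
    by (rule step_tree_cfg_attach)
      (use fin yS x y slot nochild child_count_fun_upd[OF yS(1)] in \<open>auto simp: p'_def\<close>)
  then show "step k (tree_cfg l p S) {x, y} = tree_cfg l (p(y := x)) (insert y S)"
    using tree_cfg_fun_upd[OF yS(1)] unfolding p'_def by (simp add: insert_commute)
  have count: "child_count p' (insert y S) u = child_count p S u + (if x = u then 1 else 0)" for u
    using child_count_insert[OF fin yS(1), of p' u] child_count_fun_upd[OF yS(1)]
    unfolding p'_def by simp
  have "child_count p' (insert y S) u \<le> k" for u
    using count[of u] tree slot unfolding attached_tree_def by (cases "x = u") auto
  then show "attached_tree n k l (p(y := x)) (insert y S) (d(y := Suc (d x)))"
    using tree x y parent_not_y unfolding attached_tree_def p'_def[symmetric]
    by (auto simp: p'_def)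
qed

lemma rule_tree_cfg_None:
  assumes "\<not> (x \<in> insert l S \<and> y \<notin> insert l S \<and> child_count p S x < k)"
  shows "rule k (fst (tree_cfg l p S) x) (fst (tree_cfg l p S) y) E = None"
proof (rule ccontr)
  assume "rule k (fst (tree_cfg l p S) x) (fst (tree_cfg l p S) y) E \<noteq> None"
  then obtain j where "fst (tree_cfg l p S) y = Free" "j < k"
    "fst (tree_cfg l p S) x = Lead j \<or> fst (tree_cfg l p S) x = Occ j"
    using rule_eq_SomeD by blast
  then show False using assms tree_cfg_Free_iff tree_cfg_counterD by metis
qed

lemma step_tree_cfg_idle:
  assumes "\<nexists>x y. {x, y} = {a, b} \<and> x \<in> insert l S \<and> y \<notin> insert l S \<and> child_count p S x < k"
  shows "step k (tree_cfg l p S) {a, b} = tree_cfg l p S"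
proof -
  have idle: "rule k (fst (tree_cfg l p S) x) (fst (tree_cfg l p S) y) E = None"
    if "{x, y} = {a, b}" for x y E
    by (rule rule_tree_cfg_None) (use assms that in blast)
  have "{min a b, max a b} = {a, b}" "{max a b, min a b} = {a, b}"
    by (auto simp: min_def max_def)
  then have "delta k (tree_cfg l p S) (min a b) (max a b) = tree_cfg l p S"
    by (intro delta_eq_self idle) simp_all
  moreover have "Min {a, b} = min a b" "Max {a, b} = max a b" by auto
  ultimately show ?thesis unfolding step_def by simp
qed

lemma step_tree_cfg_cases:
  assumes tree: "attached_tree n k l p S d" and e: "e \<in> pairs n"
  obtains (attach) x y where "x \<in> insert l S" "y < n" "y \<notin> insert l S"
      "step k (tree_cfg l p S) e = tree_cfg l (p(y := x)) (insert y S)"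
      "attached_tree n k l (p(y := x)) (insert y S) (d(y := Suc (d x)))"
  | (idle) "step k (tree_cfg l p S) e = tree_cfg l p S"
proof -
  obtain a b where ab: "a < n" "b < n" "e = {a, b}" using e unfolding pairs_def by blast
  show thesis
  proof (cases "\<exists>x y. {x, y} = {a, b} \<and> x \<in> insert l S \<and> y \<notin> insert l S \<and> child_count p S x < k")
    case True
    then obtain x y where xy: "{x, y} = {a, b}" "x \<in> insert l S" "y \<notin> insert l S"
      "child_count p S x < k" by blast
    have y: "y < n" using xy(1) ab by (auto simp: doubleton_eq_iff)
    show thesis
    proof (rule attach[OF xy(2) y xy(3)])
      show "step k (tree_cfg l p S) e = tree_cfg l (p(y := x)) (insert y S)"
        using attached_tree_attach(1)[OF tree xy(2,3) y xy(4)] xy(1) ab(3) by simp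
      show "attached_tree n k l (p(y := x)) (insert y S) (d(y := Suc (d x)))"
        by (rule attached_tree_attach(2)[OF tree xy(2,3) y xy(4)])
    qed
  next
    case False
    show thesis by (rule idle) (use step_tree_cfg_idle[OF False] ab(3) in simp)
  qed
qed

lemma tree_shaped_init: "l < n \<Longrightarrow> tree_shaped n k l (init l)"
  unfolding tree_shaped_def attached_tree_def
  by (rule exI[of _ "{}"], rule exI[of _ id]) (auto simp: tree_cfg_empty child_count_def)

lemma tree_shaped_intro: "attached_tree n k l p S d \<Longrightarrow> tree_shaped n k l (tree_cfg l p S)"
  unfolding tree_shaped_def by (intro exI[of _ S] exI[of _ p] exI[of _ d]) simp

lemma tree_shaped_step:
  assumes "tree_shaped n k l c" and "e \<in> pairs n"
  shows "tree_shaped n k l (step k c e)"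
proof -
  obtain S p d where c: "c = tree_cfg l p S" and tree: "attached_tree n k l p S d"
    using assms(1) unfolding tree_shaped_def by blast
  show ?thesis
  proof (rule step_tree_cfg_cases[OF tree assms(2)])
    fix x y
    assume stepped: "step k (tree_cfg l p S) e = tree_cfg l (p(y := x)) (insert y S)"
      and tree': "attached_tree n k l (p(y := x)) (insert y S) (d(y := Suc (d x)))"
    show ?thesis unfolding c stepped by (rule tree_shaped_intro[OF tree'])
  next
    assume idle: "step k (tree_cfg l p S) e = tree_cfg l p S"
    show ?thesis unfolding c idle by (rule tree_shaped_intro[OF tree])
  qed
qed

lemma free_count_tree_cfg_insert_less:
  assumes "y < n" and "y \<notin> insert l S"
  shows "free_count n (tree_cfg l p' (insert y S)) < free_count n (tree_cfg l p S)"
proof -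
  have "{..<n} - insert l (insert y S) \<subset> {..<n} - insert l S" using assms by auto
  then show ?thesis unfolding free_count_tree_cfg by (rule psubset_card_mono[rotated]) simp
qed

lemma step_idle_or_free_count_less:
  assumes "tree_shaped n k l c" and "e \<in> pairs n"
  shows "step k c e = c \<or> free_count n (step k c e) < free_count n c"
proof -
  obtain S p d where c: "c = tree_cfg l p S" and tree: "attached_tree n k l p S d"
    using assms(1) unfolding tree_shaped_def by blast
  show ?thesis
  proof (rule step_tree_cfg_cases[OF tree assms(2)])
    fix x y assume y: "y < n" "y \<notin> insert l S"
      and stepped: "step k (tree_cfg l p S) e = tree_cfg l (p(y := x)) (insert y S)"
    show ?thesis unfolding c stepped using free_count_tree_cfg_insert_less[OF y] by simp
  qed (simp add: c)
qed

lemma sum_child_count: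
  assumes "attached_tree n k l p S d"
  shows "(\<Sum>x\<in>insert l S. child_count p S x) = card S"
proof -
  have fin: "finite S" using attached_tree_finite[OF assms] .
  have "card (\<Union>x\<in>insert l S. {w\<in>S. p w = x}) = (\<Sum>x\<in>insert l S. card {w\<in>S. p w = x})"
    by (rule card_UN_disjoint) (use fin in auto)
  moreover have "(\<Union>x\<in>insert l S. {w\<in>S. p w = x}) = S"
    using attached_tree_parent[OF assms] by blast
  ultimately show ?thesis unfolding child_count_def by simp
qed

text \<open>Since every full node has \<open>k \<ge> 2\<close> children, more than half of the attached nodes
  still have a free slot.\<close>
lemma card_open_slots:
  assumes tree: "attached_tree n k l p S d" and k: "k \<ge> 2"
  shows "card (insert l S) + 1 \<le> 2 * card {x\<in>insert l S. child_count p S x < k}"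
proof -
  let ?T = "insert l S"
  let ?F = "{x\<in>?T. k \<le> child_count p S x}"
  have fin: "finite ?T" using attached_tree_finite[OF tree] by simp
  have "2 * card ?F \<le> (\<Sum>x\<in>?F. k)" using k by simp
  also have "\<dots> \<le> (\<Sum>x\<in>?F. child_count p S x)" by (rule sum_mono) simp
  also have "\<dots> \<le> (\<Sum>x\<in>?T. child_count p S x)" by (rule sum_mono2) (use fin in auto)
  also have "\<dots> = card S" by (rule sum_child_count[OF tree])
  finally have full: "2 * card ?F \<le> card S" .
  have "card {x\<in>?T. child_count p S x < k} = card ?T - card ?F"
    by (subst card_Diff_subset[symmetric]) (use fin in \<open>auto intro: arg_cong[where f = card]\<close>)
  moreover have "card ?F \<le> card ?T" by (rule card_mono) (use fin in auto)
  moreover have "card ?T = card S + 1" using tree fin unfolding attached_tree_def by simp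
  ultimately show ?thesis using full by linarith
qed

lemma attached_tree_reaches_root:
  assumes tree: "attached_tree n k l p S d" and v: "v \<in> insert l S"
  shows "\<exists>m. (p ^^ m) v = l"
  using v
proof (induction "d v" arbitrary: v rule: less_induct)
  case less
  show ?case
  proof (cases "v = l")
    case True then show ?thesis by (metis funpow_0)
  next
    case False
    then have "p v = l \<or> (p v \<in> S \<and> d (p v) < d v)"
      using tree less.prems unfolding attached_tree_def by auto
    then obtain m where "(p ^^ m) (p v) = l"
      using less.hyps[of "p v"] by (metis funpow_0 insertI2)
    then have "(p ^^ Suc m) v = l" by (simp add: funpow_Suc_right del: funpow.simps)
    then show ?thesis by blast
  qed
qed

definition rooted_tree :: "nat \<Rightarrow> nat \<Rightarrow> nat \<Rightarrow> (nat \<Rightarrow> nat) \<Rightarrow> bool" where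
  "rooted_tree n k r p \<longleftrightarrow> r < n \<and> (\<forall>v<n. v \<noteq> r \<longrightarrow> p v < n \<and> p v \<noteq> v) \<and>
     (\<forall>v<n. \<exists>m. (p ^^ m) v = r) \<and> (\<forall>u<n. card {v. v < n \<and> v \<noteq> r \<and> p v = u} \<le> k)"

definition tree_edges :: "nat \<Rightarrow> nat \<Rightarrow> (nat \<Rightarrow> nat) \<Rightarrow> nat set set" where
  "tree_edges n r p = {{v, p v} | v. v < n \<and> v \<noteq> r}"

lemma in_Tk_iff: "in_Tk n k G \<longleftrightarrow> G \<subseteq> pairs n \<and> (\<exists>r p. rooted_tree n k r p \<and> G = tree_edges n r p)"
  unfolding in_Tk_def rooted_tree_def tree_edges_def by blast

lemma in_Tk_subset_pairs: "in_Tk n k G \<Longrightarrow> G \<in> Pow (pairs n)"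
  unfolding in_Tk_def by simp

lemma tree_edges_subset_pairs: "rooted_tree n k r p \<Longrightarrow> tree_edges n r p \<subseteq> pairs n"
  unfolding rooted_tree_def tree_edges_def pairs_def by blast

lemma out_tree_cfg_complete: "out (tree_cfg l p ({..<n} - {l})) = tree_edges n l p"
  unfolding out_tree_cfg tree_edges_def by blast

lemma all_attached_tree_cfg_iff:
  "attached_tree n k l p S d \<Longrightarrow> all_attached n (tree_cfg l p S) \<longleftrightarrow> S = {..<n} - {l}"
  unfolding all_attached_def attached_tree_def tree_cfg_Free_iff by auto

lemma tree_shaped_all_attached_in_Tk:
  assumes "tree_shaped n k l c" and "all_attached n c"
  shows "in_Tk n k (out c)"
proof -
  obtain S p d where c: "c = tree_cfg l p S" and tree: "attached_tree n k l p S d"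
    using assms(1) unfolding tree_shaped_def by blast
  have S: "S = {..<n} - {l}" using all_attached_tree_cfg_iff[OF tree] assms(2) c by simp
  have l: "l < n" using tree unfolding attached_tree_def by simp
  have "p v < n \<and> p v \<noteq> v" if "v < n" "v \<noteq> l" for v
    using attached_tree_parent[OF tree, of v] l that S by auto
  moreover have "\<exists>m. (p ^^ m) v = l" if "v < n" for v
    using attached_tree_reaches_root[OF tree] that S by auto
  moreover have "card {v. v < n \<and> v \<noteq> l \<and> p v = u} \<le> k" for u
    using tree S unfolding attached_tree_def child_count_def by (simp add: conj_assoc)
  ultimately have "rooted_tree n k l p" using l unfolding rooted_tree_def by blast
  then show ?thesis
    unfolding in_Tk_iff c S out_tree_cfg_complete using tree_edges_subset_pairs by blast
qed

lemma tree_shaped_progress: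
  assumes shaped: "tree_shaped n k l c" and k: "k \<ge> 2" and "\<not> all_attached n c"
  shows "\<exists>e\<in>pairs n. free_count n (step k c e) < free_count n c"
proof -
  obtain S p d where c: "c = tree_cfg l p S" and tree: "attached_tree n k l p S d"
    using shaped unfolding tree_shaped_def by blast
  obtain y where y: "y < n" "y \<notin> insert l S"
    using assms(3) unfolding c all_attached_def tree_cfg_Free_iff by auto
  have "0 < card {x\<in>insert l S. child_count p S x < k}"
    using card_open_slots[OF tree k] by linarith
  then obtain x where x: "x \<in> insert l S" "child_count p S x < k"
    by (metis (no_types, lifting) card_gt_0_iff empty_Collect_eq)
  have "fst (step k c {x, y}) y \<noteq> Free" "fst c y = Free"
    using attached_tree_attach(1)[OF tree x(1) y(2,1) x(2)] y(2)
    unfolding c by (simp_all add: tree_cfg_Free_iff)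
  then have "step k c {x, y} \<noteq> c" by metis
  moreover have "{x, y} \<in> pairs n" using x y tree unfolding pairs_def attached_tree_def by auto
  ultimately show ?thesis using step_idle_or_free_count_less[OF shaped] by blast
qed

section \<open>Stabilisation under fairness\<close>

lemma execution_tree_shaped:
  assumes "l < n" and "execution n k l C"
  shows "tree_shaped n k l (C t)"
proof (induction t)
  case 0 then show ?case using assms tree_shaped_init unfolding execution_def by simp
next
  case (Suc t) then show ?case using assms(2) tree_shaped_step unfolding execution_def by metis
qed

lemma antimono_nat_eventually_const:
  fixes f :: "nat \<Rightarrow> nat"
  assumes "\<And>t. f (Suc t) \<le> f t"
  shows "\<exists>T. \<forall>t\<ge>T. f t = f T"
proof -
  have fin: "finite (range f)"
    by (rule finite_subset[of _ "{..f 0}"]) (use lift_Suc_antimono_le[of f, OF assms] in auto)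
  obtain T where T: "f T = Min (range f)" using Min_in[OF fin] by auto
  have "f t = f T" if "t \<ge> T" for t
    using lift_Suc_antimono_le[of f, OF assms that] fin unfolding T by (simp add: antisym)
  then show ?thesis by blast
qed

lemma iso_refl: "iso n E E"
  unfolding iso_def by (rule exI[of _ id]) auto

lemma iso_trans: "iso n E1 E2 \<Longrightarrow> iso n E2 E3 \<Longrightarrow> iso n E1 E3"
proof -
  assume "iso n E1 E2" "iso n E2 E3"
  then obtain f g where f: "bij_betw f {..<n} {..<n}" "\<forall>u<n. \<forall>v<n. {u, v} \<in> E1 \<longleftrightarrow> {f u, f v} \<in> E2"
    and g: "bij_betw g {..<n} {..<n}" "\<forall>u<n. \<forall>v<n. {u, v} \<in> E2 \<longleftrightarrow> {g u, g v} \<in> E3"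
    unfolding iso_def by blast
  have "bij_betw (g \<circ> f) {..<n} {..<n}" using f(1) g(1) by (rule bij_betw_trans)
  moreover have "\<forall>u<n. \<forall>v<n. {u, v} \<in> E1 \<longleftrightarrow> {(g \<circ> f) u, (g \<circ> f) v} \<in> E3"
    using f g bij_betwE[OF f(1)] by simp
  ultimately show ?thesis unfolding iso_def by blast
qed

text \<open>The number of free nodes eventually stays constant, and from then on every step is idle.\<close>
lemma execution_eventually_const:
  assumes l: "l < n" and exec: "execution n k l C"
  obtains T where "\<And>t. t \<ge> T \<Longrightarrow> C t = C T"
proof -
  have shaped: "tree_shaped n k l (C t)" for t by (rule execution_tree_shaped[OF l exec])
  have next_step: "\<exists>e\<in>pairs n. C (Suc t) = step k (C t) e" for t
    using exec unfolding execution_def by blast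
  have "free_count n (C (Suc t)) \<le> free_count n (C t)" for t
  proof -
    obtain e where "C (Suc t) = step k (C t) e" using next_step by blast
    then show ?thesis by (simp add: free_count_step_le)
  qed
  then obtain T where T: "\<And>t. t \<ge> T \<Longrightarrow> free_count n (C t) = free_count n (C T)"
    using antimono_nat_eventually_const[of "\<lambda>t. free_count n (C t)"] by blast
  have idle: "C (Suc t) = C t" if "t \<ge> T" for t
  proof -
    obtain e where e: "e \<in> pairs n" "C (Suc t) = step k (C t) e" using next_step by blast
    have "free_count n (C (Suc t)) = free_count n (C t)" using T[of t] T[of "Suc t"] that by simp
    then show ?thesis using step_idle_or_free_count_less[OF shaped[of t] e(1)] unfolding e(2) by simp
  qed
  have "C t = C T" if "t \<ge> T" for t
    using that by (induction t rule: dec_induct) (simp_all add: idle)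
  then show thesis by (rule that)
qed

text \<open>Fairness forbids an enabled attaching pair in the final configuration, so no node is free.\<close>
lemma fair_execution_stabilises:
  assumes k: "k \<ge> 2" and l: "l < n" and exec: "execution n k l C" and fair: "fair n k C"
  shows "\<exists>G. in_Tk n k G \<and> stabilises_to n C G"
proof -
  have shaped: "tree_shaped n k l (C t)" for t by (rule execution_tree_shaped[OF l exec])
  obtain T where const: "\<And>t. t \<ge> T \<Longrightarrow> C t = C T"
    using execution_eventually_const[OF l exec] by blast
  have recurrent: "infinite {t. C t = C T}"
    unfolding infinite_nat_iff_unbounded_le
  proof
    fix m show "\<exists>t\<ge>m. t \<in> {t. C t = C T}"
      using const[of "max m T"] by (intro exI[of _ "max m T"]) simp
  qed
  have fixed: "step k (C T) e = C T" if "e \<in> pairs n" for e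
  proof -
    have "infinite {t. C t = step k (C T) e}" using fair recurrent that unfolding fair_def by blast
    then obtain t where "t \<ge> T" "C t = step k (C T) e" unfolding infinite_nat_iff_unbounded_le by blast
    then show ?thesis using const[of t] by simp
  qed
  have "all_attached n (C T)"
  proof (rule ccontr)
    assume "\<not> all_attached n (C T)"
    then obtain e where "e \<in> pairs n" "free_count n (step k (C T) e) < free_count n (C T)"
      using tree_shaped_progress[OF shaped k] by blast
    then show False using fixed by simp
  qed
  then have "in_Tk n k (out (C T))" by (rule tree_shaped_all_attached_in_Tk[OF shaped])
  moreover have "stabilises_to n C (out (C T))"
    unfolding stabilises_to_def stable_from_def
  proof (intro exI[of _ T] allI impI)
    fix t assume "T \<le> t"
    then show "iso n (out (C t)) (out (C T))" using const[of t] iso_refl by simp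
  qed
  ultimately show ?thesis by blast
qed

section \<open>Every tree of \<open>T_k\<close> is constructible\<close>

definition tree_depth :: "nat \<Rightarrow> (nat \<Rightarrow> nat) \<Rightarrow> nat \<Rightarrow> nat" where
  "tree_depth r p v = (LEAST m. (p ^^ m) v = r)"

lemma tree_depth_parent_less:
  assumes tree: "rooted_tree n k r p" and v: "v < n" "v \<noteq> r"
  shows "tree_depth r p (p v) < tree_depth r p v"
proof -
  have "\<exists>m. (p ^^ m) v = r" using tree v unfolding rooted_tree_def by auto
  then have reach: "(p ^^ tree_depth r p v) v = r" unfolding tree_depth_def by (rule LeastI_ex)
  then obtain m where m: "tree_depth r p v = Suc m" using v by (cases "tree_depth r p v") auto
  then have "(p ^^ m) (p v) = r" using reach by (simp add: funpow_Suc_right del: funpow.simps)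
  then have "tree_depth r p (p v) \<le> m" unfolding tree_depth_def by (rule Least_le)
  then show ?thesis using m by simp
qed

lemma rooted_tree_leaf_exists:
  assumes tree: "rooted_tree n k r p" and S: "S \<subseteq> {..<n} - {r}" "S \<noteq> {}"
  obtains v where "v \<in> S" "\<forall>w\<in>S. p w \<noteq> v"
proof -
  let ?D = "tree_depth r p ` S"
  have fin: "finite S" using S(1) finite_subset by blast
  then have "Max ?D \<in> ?D" using S(2) by simp
  then obtain v where v: "v \<in> S" "tree_depth r p v = Max ?D" by auto
  have "p w \<noteq> v" if w: "w \<in> S" for w
  proof -
    have "tree_depth r p (p w) < tree_depth r p w"
      using tree_depth_parent_less[OF tree] w S(1) by auto
    moreover have "tree_depth r p w \<le> tree_depth r p v" using fin w v(2) by simp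
    ultimately show ?thesis by auto
  qed
  then show thesis using that v(1) by blast
qed

text \<open>A rooted tree is built by attaching its nodes in order of increasing depth.\<close>
lemma tree_cfg_reachable:
  assumes tree: "rooted_tree n k l q"
  shows "S \<subseteq> {..<n} - {l} \<Longrightarrow> \<forall>v\<in>S. q v \<in> insert l S \<Longrightarrow>
    \<exists>es. set es \<subseteq> pairs n \<and> foldl (step k) (init l) es = tree_cfg l q S"
proof (induction "card S" arbitrary: S rule: less_induct)
  case less
  have fin: "finite S" using less.prems(1) finite_subset by blast
  show ?case
  proof (cases "S = {}")
    case True
    then show ?thesis using tree_cfg_empty by (intro exI[of _ "[]"]) auto
  next
    case False
    obtain v where vS: "v \<in> S" and leaf: "\<forall>w\<in>S. q w \<noteq> v"
      using rooted_tree_leaf_exists[OF tree less.prems(1) False] .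
    define S' where "S' = S - {v}"
    have v: "v < n" "v \<noteq> l" "v \<notin> S'" using vS less.prems(1) unfolding S'_def by auto
    have qv: "q v < n" "q v \<noteq> v" using tree v unfolding rooted_tree_def by auto
    have "card S' < card S" unfolding S'_def using vS fin by (metis card_Diff1_less)
    moreover have "S' \<subseteq> {..<n} - {l}" "\<forall>w\<in>S'. q w \<in> insert l S'"
      using less.prems leaf unfolding S'_def by auto
    ultimately obtain es where es: "set es \<subseteq> pairs n" "foldl (step k) (init l) es = tree_cfg l q S'"
      using less.hyps by blast
    have "child_count q S' (q v) < card {x. x < n \<and> x \<noteq> l \<and> q x = q v}"
      unfolding child_count_def
      by (rule psubset_card_mono) (use less.prems(1) v S'_def in auto)
    also have "\<dots> \<le> k" using tree qv unfolding rooted_tree_def by auto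
    finally have "step k (tree_cfg l q S') {v, q v} = tree_cfg l q (insert v S')"
      using less.prems(2) vS leaf v qv fin
      by (intro step_tree_cfg_attach) (auto simp: S'_def)
    moreover have "insert v S' = S" unfolding S'_def using vS by auto
    moreover have "{v, q v} \<in> pairs n" unfolding pairs_def using v qv by blast
    ultimately show ?thesis using es by (intro exI[of _ "es @ [{v, q v}]"]) auto
  qed
qed

lemma run_shift:
  "t \<le> length es \<Longrightarrow> run k l (es @- s) t = foldl (step k) (init l) (take t es)"
proof (induction t)
  case (Suc t)
  then have "take (Suc t) es = take t es @ [es ! t]" by (simp add: take_Suc_conv_app_nth)
  then show ?case using Suc by simp
qed simp

lemma run_all_attached_const:
  assumes "\<forall>t. s !! t \<in> pairs n" and "all_attached n (run k l s T)" and "T \<le> t"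
  shows "run k l s t = run k l s T"
  using assms(3)
proof (induction t rule: dec_induct)
  case (step m)
  then show ?case using assms(1,2) step_all_attached by simp
qed simp

lemma rooted_tree_constructible:
  assumes tree: "rooted_tree n k l q" and n: "n \<ge> 2"
  shows "\<exists>C. execution n k l C \<and> stabilises_to n C (tree_edges n l q)"
proof -
  define S where "S = {..<n} - {l}"
  have "\<forall>v\<in>S. q v \<in> insert l S" using tree unfolding S_def rooted_tree_def by auto
  then obtain es where es: "set es \<subseteq> pairs n" "foldl (step k) (init l) es = tree_cfg l q S"
    using tree_cfg_reachable[OF tree] unfolding S_def by blast
  define s where "s = es @- sconst {0, 1}"
  have "{0, 1} \<in> pairs n" unfolding pairs_def using n by (intro CollectI exI[of _ 0] exI[of _ 1]) auto
  then have pairs: "\<forall>t. s !! t \<in> pairs n" using es(1) nth_mem unfolding s_def by (auto simp: shift_snth)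
  have final: "run k l s (length es) = tree_cfg l q S"
    using run_shift[of "length es" es k l] es(2) unfolding s_def by simp
  have "all_attached n (tree_cfg l q S)"
    unfolding all_attached_def S_def by (simp add: tree_cfg_Free_iff)
  then have settled: "run k l s t = tree_cfg l q S" if "t \<ge> length es" for t
    using run_all_attached_const[OF pairs, of k l "length es" t] final that by simp
  have "stabilises_to n (run k l s) (tree_edges n l q)"
    unfolding stabilises_to_def stable_from_def
    by (intro exI[of _ "length es"] allI impI) (simp add: settled iso_refl out_tree_cfg_complete S_def)
  moreover have "execution n k l (run k l s)" using pairs unfolding execution_def by auto
  ultimately show ?thesis by blast
qed

lemma tree_edges_image: "tree_edges n r p = (\<lambda>v. {v, p v}) ` {v. v < n \<and> v \<noteq> r}"
  unfolding tree_edges_def by blast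

lemma involution_image: "(\<And>x. f (f x) = x) \<Longrightarrow> f ` A = {x. f x \<in> A}"
  by (auto simp: image_iff) metis

lemma rooted_tree_conjugate:
  assumes tree: "rooted_tree n k r p"
    and invol: "\<And>x. \<sigma> (\<sigma> x) = x" and range: "\<And>x. x < n \<Longrightarrow> \<sigma> x < n"
  defines "q \<equiv> \<sigma> \<circ> p \<circ> \<sigma>"
  shows "rooted_tree n k (\<sigma> r) q" and "iso n (tree_edges n (\<sigma> r) q) (tree_edges n r p)"
proof -
  have \<sigma>_eq: "\<sigma> x = y \<longleftrightarrow> x = \<sigma> y" for x y by (metis invol)
  have \<sigma>_less: "\<sigma> x < n \<longleftrightarrow> x < n" for x by (metis invol range)
  have r: "r < n" and parent: "\<forall>v<n. v \<noteq> r \<longrightarrow> p v < n \<and> p v \<noteq> v"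
    and reach: "\<forall>v<n. \<exists>m. (p ^^ m) v = r"
    and children: "\<forall>u<n. card {v. v < n \<and> v \<noteq> r \<and> p v = u} \<le> k"
    using tree unfolding rooted_tree_def by blast+
  have q_pow: "(q ^^ m) v = \<sigma> ((p ^^ m) (\<sigma> v))" for m v
    by (induction m) (simp_all add: q_def invol)
  have "q v < n \<and> q v \<noteq> v" if "v < n" "v \<noteq> \<sigma> r" for v
  proof -
    have "p (\<sigma> v) < n" "p (\<sigma> v) \<noteq> \<sigma> v"
      using parent that \<sigma>_less \<sigma>_eq by auto
    then show ?thesis unfolding q_def comp_apply \<sigma>_less \<sigma>_eq by simp
  qed
  moreover have "\<exists>m. (q ^^ m) v = \<sigma> r" if "v < n" for v
    using reach that \<sigma>_less unfolding q_pow by auto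
  moreover have "card {v. v < n \<and> v \<noteq> \<sigma> r \<and> q v = u} \<le> k" if "u < n" for u
  proof -
    have "{v. v < n \<and> v \<noteq> \<sigma> r \<and> q v = u} = \<sigma> ` {w. w < n \<and> w \<noteq> r \<and> p w = \<sigma> u}"
      unfolding involution_image[of \<sigma>, OF invol] q_def comp_apply
      by (auto simp: \<sigma>_less \<sigma>_eq)
    moreover have "inj \<sigma>" by (metis invol injI)
    ultimately show ?thesis
      using children \<sigma>_less that by (simp add: card_image inj_on_subset)
  qed
  ultimately show "rooted_tree n k (\<sigma> r) q" using r \<sigma>_less unfolding rooted_tree_def by blast
  have image_image_\<sigma>: "\<sigma> ` (\<sigma> ` e) = e" for e by (simp add: image_image invol)
  have "{v. v < n \<and> v \<noteq> \<sigma> r} = \<sigma> ` {w. w < n \<and> w \<noteq> r}"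
    unfolding involution_image[of \<sigma>, OF invol] by (auto simp: \<sigma>_less \<sigma>_eq)
  then have "tree_edges n (\<sigma> r) q = (\<lambda>v. {v, q v}) ` \<sigma> ` {w. w < n \<and> w \<noteq> r}"
    unfolding tree_edges_image by (rule arg_cong)
  also have "\<dots> = image \<sigma> ` tree_edges n r p"
    unfolding tree_edges_image image_image q_def by (simp add: invol)
  finally have "tree_edges n (\<sigma> r) q = image \<sigma> ` tree_edges n r p" .
  then have "{u, v} \<in> tree_edges n (\<sigma> r) q \<longleftrightarrow> {\<sigma> u, \<sigma> v} \<in> tree_edges n r p" for u v
    unfolding involution_image[of "image \<sigma>", OF image_image_\<sigma>] by simp
  moreover have "bij_betw \<sigma> {..<n} {..<n}"
    by (rule bij_betw_byWitness[where f' = \<sigma>]) (auto simp: invol range)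
  ultimately show "iso n (tree_edges n (\<sigma> r) q) (tree_edges n r p)" unfolding iso_def by blast
qed

text \<open>Relabel the given tree so that its root is the leader, then build it.\<close>
lemma in_Tk_constructible:
  assumes G: "in_Tk n k G" and l: "l < n" and n: "n \<ge> 2"
  shows "\<exists>C. execution n k l C \<and> stabilises_to n C G"
proof -
  obtain r p where tree: "rooted_tree n k r p" and G_eq: "G = tree_edges n r p"
    using G unfolding in_Tk_iff by blast
  define \<sigma> where "\<sigma> x = (if x = l then r else if x = r then l else x)" for x
  have invol: "\<sigma> (\<sigma> x) = x" for x unfolding \<sigma>_def by auto
  have range: "x < n \<Longrightarrow> \<sigma> x < n" for x using tree l unfolding \<sigma>_def rooted_tree_def by auto
  have root: "\<sigma> r = l" unfolding \<sigma>_def by simp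
  obtain C where C: "execution n k l C" "stabilises_to n C (tree_edges n l (\<sigma> \<circ> p \<circ> \<sigma>))"
    using rooted_tree_constructible[OF rooted_tree_conjugate(1)[OF tree invol range] n] root by auto
  have "iso n (tree_edges n l (\<sigma> \<circ> p \<circ> \<sigma>)) G"
    using rooted_tree_conjugate(2)[OF tree invol range] root G_eq by simp
  then have "stabilises_to n C G"
    using C(2) iso_trans unfolding stabilises_to_def stable_from_def by blast
  then show ?thesis using C(1) by blast
qed

section \<open>The uniform random scheduler\<close>

abbreviation uniform_pairs :: "nat \<Rightarrow> nat set measure" where
  "uniform_pairs n \<equiv> measure_pmf (pmf_of_set (pairs n))"

text \<open>Unlike \<open>run\<close>, this recursion peels off the first interaction, which is the form the Markov
  property of the scheduler needs.\<close>
primrec run_from :: "nat \<Rightarrow> cfg \<Rightarrow> nat set stream \<Rightarrow> nat \<Rightarrow> cfg" where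
  "run_from k c s 0 = c"
| "run_from k c s (Suc t) = run_from k (step k c (shd s)) (stl s) t"

lemma run_from_Suc_snth: "run_from k c s (Suc t) = step k (run_from k c s t) (s !! t)"
  by (induction t arbitrary: c s) simp_all

lemma run_eq_run_from: "run k l s t = run_from k (init l) s t"
  by (induction t) (simp_all add: run_from_Suc_snth del: run_from.simps(2))

lemma measurable_run_from:
  "Measurable.pred (stream_space (measure_pmf p)) (\<lambda>s. P (run_from k c s t))"
proof (induction t arbitrary: c P)
  case (Suc t)
  have eq: "(\<lambda>s. P (run_from k c s (Suc t))) =
      (\<lambda>s. \<exists>a b. Min (shd s) = a \<and> Max (shd s) = b \<and> P (run_from k (delta k c a b) (stl s) t))"
    by (simp add: step_def)
  have Min: "Measurable.pred (stream_space (measure_pmf p)) (\<lambda>s. Min (shd s) = a)"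
    and Max: "Measurable.pred (stream_space (measure_pmf p)) (\<lambda>s. Max (shd s) = a)" for a :: nat
    by (rule measurable_compose[OF measurable_shd], simp)+
  have "Measurable.pred (stream_space (measure_pmf p)) (\<lambda>s. P (run_from k (delta k c a b) (stl s) t))"
    for a b by (rule measurable_compose[OF measurable_stl Suc.IH])
  then show ?case unfolding eq by (intro pred_intros_countable pred_intros_logic Min Max)
qed simp

lemma finite_pairs: "finite (pairs n)"
  by (rule finite_subset[of _ "Pow {..<n}"]) (auto simp: pairs_def)

lemma pairs_nonempty: "n \<ge> 2 \<Longrightarrow> pairs n \<noteq> {}"
proof -
  assume "n \<ge> 2"
  then have "{0, 1} \<in> pairs n" unfolding pairs_def by (intro CollectI exI[of _ 0] exI[of _ 1]) auto
  then show ?thesis by auto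
qed

lemma card_pairs_le: "card (pairs n) \<le> n * n"
proof -
  have "pairs n \<subseteq> (\<lambda>(u, v). {u, v}) ` ({..<n} \<times> {..<n})" unfolding pairs_def by auto
  then have "card (pairs n) \<le> card ((\<lambda>(u, v). {u, v}) ` ({..<n} \<times> {..<n}))"
    by (rule card_mono[rotated]) simp
  also have "\<dots> \<le> card ({..<n} \<times> {..<n})" by (rule card_image_le) simp
  finally show ?thesis by (simp add: card_cartesian_product)
qed

lemma emeasure_run_from_Suc:
  assumes "n \<ge> 2"
  shows "emeasure (sched n) {s \<in> space (sched n). P (run_from k c s (Suc t))} =
    (\<Sum>e\<in>pairs n. emeasure (sched n) {s \<in> space (sched n). P (run_from k (step k c e) s t)}) /
      of_nat (card (pairs n))"
proof -
  let ?S = "stream_space (uniform_pairs n)"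
  have "emeasure ?S {s \<in> space ?S. P (run_from k c s (Suc t))} =
      (\<integral>\<^sup>+e. emeasure ?S {x \<in> space ?S. e ## x \<in> {s \<in> space ?S. P (run_from k c s (Suc t))}} \<partial>uniform_pairs n)"
    using measurable_run_from[unfolded pred_def]
    by (rule prob_space.emeasure_stream_space[OF prob_space_measure_pmf])
  also have "\<dots> = (\<integral>\<^sup>+e. emeasure ?S {s \<in> space ?S. P (run_from k (step k c e) s t)} \<partial>uniform_pairs n)"
    by (simp add: space_stream_space)
  also have "\<dots> = (\<Sum>e\<in>pairs n. emeasure ?S {s \<in> space ?S. P (run_from k (step k c e) s t)}) /
      of_nat (card (pairs n))"
    by (rule nn_integral_pmf_of_set[OF pairs_nonempty[OF assms] finite_pairs])
  finally show ?thesis unfolding sched_def .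
qed

lemma AE_sched_pairs:
  assumes "n \<ge> 2"
  shows "AE s in sched n. \<forall>t. s !! t \<in> pairs n"
proof -
  have "AE s in sched n. stream_all (\<lambda>e. e \<in> pairs n) s"
    unfolding sched_def
  proof (rule prob_space.AE_stream_all[OF prob_space_measure_pmf])
    show "AE e in uniform_pairs n. e \<in> pairs n"
      by (simp add: AE_measure_pmf_iff set_pmf_of_set[OF pairs_nonempty[OF assms] finite_pairs])
  qed simp
  then show ?thesis unfolding stream_all_def .
qed

section \<open>The drift argument\<close>

text \<open>With \<open>r\<close> free nodes a step attaches one with probability at least
  \<open>contraction n / drift_weight n r\<close>, so \<open>potential n r = (\<Prod>i=1..r. 1 / (1 - drift_weight n i))\<close>
  shrinks in expectation by the factor \<open>1 - contraction n\<close>.\<close>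
definition drift_weight :: "nat \<Rightarrow> nat \<Rightarrow> real" where
  "drift_weight n i = real n / (4 * (real n - real i) * real i)"

primrec potential :: "nat \<Rightarrow> nat \<Rightarrow> real" where
  "potential n 0 = 1"
| "potential n (Suc r) = potential n r / (1 - drift_weight n (Suc r))"

definition contraction :: "nat \<Rightarrow> real" where
  "contraction n = 1 / (8 * real n)"

lemma drift_weight_bounds:
  assumes "n \<ge> 2" and "1 \<le> i" "i < n"
  shows "0 < drift_weight n i" "drift_weight n i \<le> 1/2"
proof -
  have a: "real n - real i \<ge> 1" and b: "real i \<ge> 1" using assms by linarith+
  then have pos: "4 * (real n - real i) * real i > 0" by simp
  then show "0 < drift_weight n i" unfolding drift_weight_def using assms by simp
  have "(real n - real i) * real i - (real n - 1) = (real i - 1) * (real n - real i - 1)"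
    by (simp add: algebra_simps)
  also have "\<dots> \<ge> 0" using a b by simp
  finally have "real n \<le> 2 * ((real n - real i) * real i)" using assms by simp
  then show "drift_weight n i \<le> 1/2" unfolding drift_weight_def using pos by (simp add: field_simps)
qed

lemma potential_ge_1: "n \<ge> 2 \<Longrightarrow> r < n \<Longrightarrow> potential n r \<ge> 1"
proof (induction r)
  case (Suc r)
  then have "potential n r \<ge> 1" "0 < drift_weight n (Suc r)" "drift_weight n (Suc r) \<le> 1/2"
    using drift_weight_bounds[of n "Suc r"] by auto
  then show ?case by (simp add: field_simps)
qed simp

lemma potential_mono: "n \<ge> 2 \<Longrightarrow> r' \<le> r \<Longrightarrow> r < n \<Longrightarrow> potential n r' \<le> potential n r"
proof (induction r)
  case (Suc r)
  have "0 < drift_weight n (Suc r)" "drift_weight n (Suc r) \<le> 1/2" "potential n r \<ge> 1"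
    using drift_weight_bounds[of n "Suc r"] potential_ge_1[of n r] Suc.prems by auto
  then have "potential n r \<le> potential n (Suc r)" by (simp add: field_simps)
  then show ?case using Suc by (cases "r' = Suc r") auto
qed simp

lemma potential_pred:
  assumes "n \<ge> 2" "1 \<le> r" "r < n"
  shows "potential n (r - 1) = potential n r * (1 - drift_weight n r)"
proof -
  obtain r' where r: "r = Suc r'" using assms by (cases r) auto
  have "drift_weight n r \<le> 1/2" using drift_weight_bounds assms by auto
  then show ?thesis unfolding r by simp
qed

lemma potential_le_exp: "n \<ge> 2 \<Longrightarrow> r < n \<Longrightarrow> potential n r \<le> exp (2 * (\<Sum>i=1..r. drift_weight n i))"
proof (induction r)
  case (Suc r)
  have w: "0 < drift_weight n (Suc r)" "drift_weight n (Suc r) \<le> 1/2"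
    using drift_weight_bounds[of n "Suc r"] Suc.prems by auto
  have "1 / (1 - drift_weight n (Suc r)) \<le> 1 + 2 * drift_weight n (Suc r)"
    using w by (simp add: field_simps)
  also have "\<dots> \<le> exp (2 * drift_weight n (Suc r))" by (rule exp_ge_add_one_self)
  finally have step: "1 / (1 - drift_weight n (Suc r)) \<le> exp (2 * drift_weight n (Suc r))" .
  have "potential n (Suc r) = potential n r * (1 / (1 - drift_weight n (Suc r)))" by simp
  also have "\<dots> \<le> exp (2 * (\<Sum>i=1..r. drift_weight n i)) * exp (2 * drift_weight n (Suc r))"
    using Suc potential_ge_1[of n r] step w by (intro mult_mono) auto
  also have "\<dots> = exp (2 * (\<Sum>i=1..Suc r. drift_weight n i))"
    by (simp add: exp_add[symmetric] algebra_simps)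
  finally show ?case .
qed simp

text \<open>Partial fractions: \<open>2 drift_weight n i = (1/i + 1/(n-i)) / 2\<close>.\<close>
lemma sum_drift_weight:
  assumes "n \<ge> 2"
  shows "2 * (\<Sum>i=1..n-1. drift_weight n i) = harm (n - 1)"
proof -
  have partial: "2 * drift_weight n i = (1 / real i + 1 / (real n - real i)) / 2"
    if "i \<in> {1..n-1}" for i
    using that assms unfolding drift_weight_def by (auto simp: field_simps of_nat_diff)
  have "2 * (\<Sum>i=1..n-1. drift_weight n i) = (\<Sum>i=1..n-1. 2 * drift_weight n i)"
    by (simp add: sum_distrib_left)
  also have "\<dots> = (\<Sum>i=1..n-1. (1 / real i + 1 / (real n - real i)) / 2)"
    by (rule sum.cong[OF refl partial])
  also have "\<dots> = ((\<Sum>i=1..n-1. 1 / real i) + (\<Sum>i=1..n-1. 1 / (real n - real i))) / 2"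
    by (simp only: sum_divide_distrib[symmetric] sum.distrib)
  also have "(\<Sum>i=1..n-1. 1 / (real n - real i)) = (\<Sum>i=1..n-1. 1 / real i)"
    by (rule sum.reindex_bij_witness[of _ "\<lambda>i. n - i" "\<lambda>i. n - i"])
      (use assms in \<open>auto simp: of_nat_diff\<close>)
  also have "(\<Sum>i=1..n-1. 1 / real i) = harm (n - 1)"
    unfolding harm_def by (simp add: divide_inverse)
  finally show ?thesis by simp
qed

lemma harm_le_one_plus_ln: "n \<ge> 1 \<Longrightarrow> harm n \<le> 1 + ln (real n)"
  using euler_mascheroni_sequence_decreasing[of 1 n] by (simp add: harm_def)

lemma potential_le:
  assumes "n \<ge> 2"
  shows "potential n (n - 1) \<le> exp 1 * real n"
proof -
  have "potential n (n - 1) \<le> exp (harm (n - 1))"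
    using potential_le_exp[of n "n - 1"] sum_drift_weight assms by simp
  also have "harm (n - 1) \<le> 1 + ln (real n)"
  proof -
    have "harm (n - 1) \<le> 1 + ln (real (n - 1))" using harm_le_one_plus_ln[of "n - 1"] assms by simp
    also have "\<dots> \<le> 1 + ln (real n)" using assms by simp
    finally show ?thesis .
  qed
  then have "exp (harm (n - 1)) \<le> exp (1 + ln (real n))" by simp
  also have "\<dots> = exp 1 * real n" using assms by (simp add: exp_add)
  finally show ?thesis .
qed

lemma drift_weight_attaching:
  assumes r: "1 \<le> r" "r < n" and g: "(n - r + 1) * r \<le> 2 * g"
  shows "real n / 8 \<le> real g * drift_weight n r"
proof -
  define d where "d = real n - real r"
  have d: "d \<ge> 1" using r unfolding d_def by linarith
  have "real ((n - r + 1) * r) \<le> real (2 * g)" using g by (simp only: of_nat_le_iff)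
  then have "real (n - r + 1) * real r \<le> 2 * real g" by (simp only: of_nat_mult of_nat_numeral)
  moreover have "real (n - r + 1) = d + 1" using r by (simp add: d_def of_nat_diff)
  ultimately have "(d + 1) * real r \<le> 2 * real g" by (simp add: algebra_simps)
  then have "d * real r \<le> 2 * real g" using r by (simp add: algebra_simps)
  then have "real n * (d * real r) \<le> real n * (2 * real g)" by (rule mult_left_mono) simp
  then show ?thesis using d r unfolding drift_weight_def d_def[symmetric] by (simp add: field_simps)
qed

text \<open>One step of the drift argument; \<open>v e\<close> is the potential after the interaction \<open>e\<close>.\<close>
lemma sum_potential_le:
  fixes v :: "'a \<Rightarrow> real"
  assumes n: "n \<ge> 2" and r: "1 \<le> r" "r < n" and P: "finite P" "card P \<le> n * n"
    and A: "A \<subseteq> P" "(n - r + 1) * r \<le> 2 * card A"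
    and v: "\<forall>e\<in>P. v e \<le> potential n r" "\<forall>e\<in>A. v e \<le> potential n (r - 1)"
  shows "(\<Sum>e\<in>P. v e) \<le> real (card P) * ((1 - contraction n) * potential n r)"
proof -
  let ?\<psi> = "potential n r"
  have fin: "finite A" using A(1) P(1) finite_subset by blast
  have "(\<Sum>e\<in>P. v e) = (\<Sum>e\<in>P - A. v e) + (\<Sum>e\<in>A. v e)" by (rule sum.subset_diff[OF A(1) P(1)])
  also have "\<dots> \<le> real (card (P - A)) * ?\<psi> + real (card A) * potential n (r - 1)"
    using v A(1) by (intro add_mono sum_bounded_above) auto
  also have "real (card (P - A)) = real (card P) - real (card A)"
    using A(1) fin by (simp add: card_Diff_subset of_nat_diff card_mono[OF P(1)])
  also have "(real (card P) - real (card A)) * ?\<psi> + real (card A) * potential n (r - 1) =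
      ?\<psi> * (real (card P) - real (card A) * drift_weight n r)"
    unfolding potential_pred[OF n r] by (simp add: algebra_simps)
  also have "\<dots> \<le> ?\<psi> * (real (card P) * (1 - contraction n))"
  proof (rule mult_left_mono)
    have "real (card P) * contraction n \<le> real n * real n / (8 * real n)"
      using P(2) unfolding contraction_def by (simp add: divide_right_mono flip: of_nat_mult)
    also have "\<dots> = real n / 8" using n by simp
    also have "\<dots> \<le> real (card A) * drift_weight n r" by (rule drift_weight_attaching[OF r A(2)])
    finally show "real (card P) - real (card A) * drift_weight n r \<le> real (card P) * (1 - contraction n)"
      by (simp add: algebra_simps)
    show "0 \<le> ?\<psi>" using potential_ge_1[OF n r(2)] by simp
  qed
  finally show ?thesis by (simp add: algebra_simps)
qed

lemma attaching_pairs: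
  assumes shaped: "tree_shaped n k l c" and k: "k \<ge> 2"
  obtains A where "A \<subseteq> pairs n"
    and "(n - free_count n c + 1) * free_count n c \<le> 2 * card A"
    and "\<forall>e\<in>A. free_count n (step k c e) < free_count n c"
proof -
  obtain S p d where c: "c = tree_cfg l p S" and tree: "attached_tree n k l p S d"
    using shaped unfolding tree_shaped_def by blast
  define T where "T = insert l S"
  define Open where "Open = {x\<in>T. child_count p S x < k}"
  define Free where "Free = {..<n} - T"
  define A where "A = (\<lambda>(x, y). {x, y}) ` (Open \<times> Free)"
  have T: "T \<subseteq> {..<n}" "finite T" using tree attached_tree_finite[OF tree]
    unfolding attached_tree_def T_def by auto
  have r: "free_count n c = card Free" unfolding c free_count_tree_cfg Free_def T_def ..
  have "card T + card Free = n"
    unfolding Free_def using T card_mono[OF _ T(1)] by (simp add: card_Diff_subset)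
  moreover have "card T + 1 \<le> 2 * card Open"
    using card_open_slots[OF tree k] unfolding Open_def T_def .
  ultimately have open_ge: "n - card Free + 1 \<le> 2 * card Open" by linarith
  have "inj_on (\<lambda>(x, y). {x, y}) (Open \<times> Free)"
    by (rule inj_onI) (auto simp: Open_def Free_def doubleton_eq_iff)
  then have "card A = card Open * card Free"
    unfolding A_def by (simp add: card_image card_cartesian_product)
  then have "(n - free_count n c + 1) * free_count n c \<le> 2 * card A"
    unfolding r using mult_le_mono1[OF open_ge, of "card Free"] by (simp add: algebra_simps)
  moreover have "A \<subseteq> pairs n"
    using T unfolding A_def Open_def Free_def pairs_def by blast
  moreover have "free_count n (step k c e) < free_count n c" if e: "e \<in> A" for e
  proof -
    obtain x y where xy: "x \<in> Open" "y \<in> Free" "e = {x, y}" using e unfolding A_def by blast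
    then have y: "y < n" "y \<notin> insert l S" and x: "x \<in> insert l S" "child_count p S x < k"
      unfolding Open_def Free_def T_def by auto
    then have "step k c e = tree_cfg l (p(y := x)) (insert y S)"
      unfolding c xy(3) by (intro attached_tree_attach(1)[OF tree])
    then show ?thesis unfolding c using free_count_tree_cfg_insert_less[OF y] by simp
  qed
  ultimately show thesis using that by blast
qed

lemma all_attached_run_from: "all_attached n c \<Longrightarrow> all_attached n (run_from k c s t)"
  by (induction t arbitrary: c s) (simp_all add: all_attached_step)

lemma free_count_less: "tree_shaped n k l c \<Longrightarrow> free_count n c < n"
proof -
  assume "tree_shaped n k l c"
  then obtain S p d where c: "c = tree_cfg l p S" and tree: "attached_tree n k l p S d"
    unfolding tree_shaped_def by blast
  have "l < n" using tree unfolding attached_tree_def by simp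
  then have "card ({..<n} - insert l S) < card {..<n}" by (intro psubset_card_mono) auto
  then show ?thesis unfolding c free_count_tree_cfg by simp
qed

lemma potential_step_sum_le:
  assumes k: "k \<ge> 2" and n: "n \<ge> 2" and shaped: "tree_shaped n k l c"
    and "\<not> all_attached n c"
  shows "(\<Sum>e\<in>pairs n. potential n (free_count n (step k c e)))
    \<le> real (card (pairs n)) * ((1 - contraction n) * potential n (free_count n c))"
proof -
  define r where "r = free_count n c"
  have r: "1 \<le> r" "r < n"
    using assms(4) free_count_less[OF shaped] all_attached_iff_free_count unfolding r_def by auto
  obtain A where A: "A \<subseteq> pairs n" "(n - r + 1) * r \<le> 2 * card A"
    "\<forall>e\<in>A. free_count n (step k c e) < r"
    using attaching_pairs[OF shaped k] unfolding r_def by blast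
  show ?thesis unfolding r_def[symmetric]
  proof (rule sum_potential_le[OF n r finite_pairs card_pairs_le A(1,2)])
    show "\<forall>e\<in>pairs n. potential n (free_count n (step k c e)) \<le> potential n r"
      unfolding r_def by (auto intro!: potential_mono[OF n free_count_step_le free_count_less[OF shaped]])
    show "\<forall>e\<in>A. potential n (free_count n (step k c e)) \<le> potential n (r - 1)"
    proof
      fix e assume "e \<in> A"
      then have "free_count n (step k c e) \<le> r - 1" using A(3) by fastforce
      then show "potential n (free_count n (step k c e)) \<le> potential n (r - 1)"
        using r by (intro potential_mono[OF n]) auto
    qed
  qed
qed

lemma sum_ennreal_divide_card:
  assumes "finite P" and "P \<noteq> {}" and "\<And>e. e \<in> P \<Longrightarrow> 0 \<le> f e"
  shows "(\<Sum>e\<in>P. ennreal (f e)) / of_nat (card P) = ennreal ((\<Sum>e\<in>P. f e) / real (card P))"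
proof -
  have "real (card P) > 0" using assms(1,2) by (simp add: card_gt_0_iff)
  then show ?thesis
    using assms(3) by (simp add: sum_ennreal ennreal_of_nat_eq_real_of_nat divide_ennreal sum_nonneg)
qed

text \<open>The drift argument proper: \<open>(1 - contraction n)\<^sup>-\<^sup>t \<cdot> potential n (free_count n c\<^sub>t)\<close> is a
  supermartingale until all nodes are attached.\<close>
lemma emeasure_not_all_attached_le:
  assumes k: "k \<ge> 2" and n: "n \<ge> 2"
  shows "tree_shaped n k l c \<Longrightarrow>
    emeasure (sched n) {s \<in> space (sched n). \<not> all_attached n (run_from k c s T)}
      \<le> ennreal ((1 - contraction n) ^ T * potential n (free_count n c))"
proof (induction T arbitrary: c)
  case 0
  interpret prob_space "sched n"
    unfolding sched_def by (rule prob_space.prob_space_stream_space[OF prob_space_measure_pmf])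
  have "emeasure (sched n) {s \<in> space (sched n). \<not> all_attached n (run_from k c s 0)} \<le> 1"
    by (rule emeasure_le_1)
  also have "1 \<le> ennreal ((1 - contraction n) ^ 0 * potential n (free_count n c))"
    using potential_ge_1[OF n free_count_less[OF "0.prems"]] by simp
  finally show ?case .
next
  case (Suc T)
  let ?F = "\<lambda>c. emeasure (sched n) {s \<in> space (sched n). \<not> all_attached n (run_from k c s T)}"
  let ?\<alpha> = "(1 - contraction n) ^ T"
  let ?v = "\<lambda>e. potential n (free_count n (step k c e))"
  let ?N = "real (card (pairs n))"
  have \<alpha>: "?\<alpha> \<ge> 0" unfolding contraction_def using n by simp
  have N: "?N > 0" using pairs_nonempty[OF n] finite_pairs by (simp add: card_gt_0_iff)
  show ?case
  proof (cases "all_attached n c")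
    case True
    then have empty: "{s \<in> space (sched n). \<not> all_attached n (run_from k c s (Suc T))} = {}"
      using all_attached_run_from by blast
    show ?thesis unfolding empty by simp
  next
    case False
    have "(\<Sum>e\<in>pairs n. ?\<alpha> * ?v e) / ?N = ?\<alpha> * (\<Sum>e\<in>pairs n. ?v e) / ?N"
      by (simp add: sum_distrib_left)
    also have "\<dots> \<le> ?\<alpha> * (?N * ((1 - contraction n) * potential n (free_count n c))) / ?N"
      using potential_step_sum_le[OF k n Suc.prems False] \<alpha> N
      by (intro divide_right_mono mult_left_mono) auto
    also have "\<dots> = (1 - contraction n) ^ Suc T * potential n (free_count n c)" using N by simp
    finally have drift: "(\<Sum>e\<in>pairs n. ?\<alpha> * ?v e) / ?N
        \<le> (1 - contraction n) ^ Suc T * potential n (free_count n c)" .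
    have v: "0 \<le> ?\<alpha> * ?v e" if "e \<in> pairs n" for e
      using potential_ge_1[OF n free_count_less[OF tree_shaped_step[OF Suc.prems that]]] \<alpha> by simp
    have "emeasure (sched n) {s \<in> space (sched n). \<not> all_attached n (run_from k c s (Suc T))} =
        (\<Sum>e\<in>pairs n. ?F (step k c e)) / of_nat (card (pairs n))"
      by (rule emeasure_run_from_Suc[OF n])
    also have "\<dots> \<le> (\<Sum>e\<in>pairs n. ennreal (?\<alpha> * ?v e)) / of_nat (card (pairs n))"
      using Suc.IH tree_shaped_step[OF Suc.prems] by (intro divide_right_mono_ennreal sum_mono) auto
    also have "\<dots> = ennreal ((\<Sum>e\<in>pairs n. ?\<alpha> * ?v e) / ?N)"
      by (rule sum_ennreal_divide_card[OF finite_pairs pairs_nonempty[OF n] v])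
    also have "\<dots> \<le> ennreal ((1 - contraction n) ^ Suc T * potential n (free_count n c))"
      using drift by (rule ennreal_leI)
    finally show ?thesis .
  qed
qed

lemma free_count_init: "l < n \<Longrightarrow> free_count n (init l) = n - 1"
proof -
  assume "l < n"
  moreover have "{u. u < n \<and> fst (init l) u = Free} = {..<n} - {l}" unfolding init_def by auto
  ultimately show ?thesis unfolding free_count_def by simp
qed

lemma prob_not_all_attached_le:
  assumes "k \<ge> 2" and n: "n \<ge> 2" and l: "l < n"
  shows "measure (sched n) {s \<in> space (sched n). \<not> all_attached n (run k l s T)}
    \<le> (1 - contraction n) ^ T * (exp 1 * real n)"
proof -
  interpret prob_space "sched n"
    unfolding sched_def by (rule prob_space.prob_space_stream_space[OF prob_space_measure_pmf])
  have "emeasure (sched n) {s \<in> space (sched n). \<not> all_attached n (run k l s T)}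
      \<le> ennreal ((1 - contraction n) ^ T * potential n (n - 1))"
    unfolding run_eq_run_from
    using emeasure_not_all_attached_le[OF assms(1) n tree_shaped_init[OF l]] free_count_init[OF l]
    by simp
  also have "\<dots> \<le> ennreal ((1 - contraction n) ^ T * (exp 1 * real n))"
    using potential_le[OF n] n by (intro ennreal_leI mult_left_mono) (simp_all add: contraction_def)
  finally have "ennreal (measure (sched n) {s \<in> space (sched n). \<not> all_attached n (run k l s T)})
      \<le> ennreal ((1 - contraction n) ^ T * (exp 1 * real n))"
    by (simp add: emeasure_eq_measure)
  moreover have "0 \<le> (1 - contraction n) ^ T * (exp 1 * real n)"
    using n by (simp add: contraction_def)
  ultimately show ?thesis by (simp add: ennreal_le_iff)
qed

lemma contraction_power_le:
  fixes a :: real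
  assumes a: "a > 0" and n: "n \<ge> 3"
  shows "(1 - contraction n) ^ nat \<lfloor>8 * (a + 3) * real n * ln (real n)\<rfloor> * (exp 1 * real n)
    \<le> real n powr (- a)"
proof -
  define B where "B = 8 * (a + 3) * real n * ln (real n)"
  define T where "T = nat \<lfloor>B\<rfloor>"
  define \<theta> where "\<theta> = contraction n"
  have n0: "real n > 0" using n by simp
  have ln1: "ln (real n) \<ge> 1"
  proof -
    have "exp 1 \<le> real n" using exp_le n by linarith
    then show ?thesis using n0 by (metis exp_gt_zero ln_exp ln_le_cancel_iff)
  qed
  then have "B \<ge> 0" unfolding B_def using a by simp
  then have T: "real T \<ge> B - 1" unfolding T_def by linarith
  have \<theta>: "0 < \<theta>" "\<theta> \<le> 1" unfolding \<theta>_def contraction_def using n by (auto simp: field_simps)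
  have "(1 - \<theta>) ^ T \<le> exp (- \<theta>) ^ T"
    using \<theta> exp_ge_add_one_self[of "- \<theta>"] by (intro power_mono) auto
  also have "\<dots> = exp (- (\<theta> * real T))" by (simp add: exp_of_nat_mult[symmetric] mult.commute)
  also have "\<dots> \<le> exp (1 - (a + 3) * ln (real n))"
  proof -
    have "\<theta> * (B - 1) \<le> \<theta> * real T" using \<theta> T by (intro mult_left_mono) auto
    moreover have "\<theta> * (B - 1) = (a + 3) * ln (real n) - \<theta>"
      unfolding B_def \<theta>_def contraction_def using n0 by (simp add: field_simps)
    ultimately show ?thesis using \<theta> by simp
  qed
  finally have "(1 - \<theta>) ^ T * (exp 1 * real n) \<le> exp (1 - (a + 3) * ln (real n)) * exp (1 + ln (real n))"
    using n0 by (simp add: exp_add mult_right_mono)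
  also have "\<dots> = exp (2 - (a + 2) * ln (real n))" by (simp add: exp_add[symmetric] algebra_simps)
  also have "\<dots> \<le> exp (- a * ln (real n))" using ln1 by (simp add: algebra_simps)
  also have "\<dots> = real n powr (- a)" unfolding powr_def using n0 by simp
  finally show ?thesis unfolding T_def B_def \<theta>_def .
qed

lemma sets_stabilisation_event:
  "{s \<in> space (sched n). \<exists>T::nat. \<exists>G. real T \<le> B \<and> in_Tk n k G \<and> stable_from n (run k l s) G T}
    \<in> sets (sched n)"
proof -
  have "Measurable.pred (sched n) (\<lambda>s. \<exists>T::nat. \<exists>G\<in>Pow (pairs n). real T \<le> B \<and> in_Tk n k G \<and>
      (\<forall>t. T \<le> t \<longrightarrow> iso n (out (run_from k (init l) s t)) G))"
    unfolding sched_def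
    by (rule pred_intros_countable(2), rule pred_intros_finite(4), simp add: finite_pairs,
        rule pred_intros_conj1', rule pred_intros_conj1', rule pred_intros_countable(1),
        rule pred_intros_imp', rule measurable_run_from)
  moreover have "(\<exists>G. real T \<le> B \<and> in_Tk n k G \<and> P G) \<longleftrightarrow>
      (\<exists>G\<in>Pow (pairs n). real T \<le> B \<and> in_Tk n k G \<and> P G)" for T :: nat and P
    using in_Tk_subset_pairs by (metis (no_types, lifting))
  ultimately show ?thesis unfolding pred_def stable_from_def run_eq_run_from by presburger
qed

lemma run_all_attached_stable:
  assumes l: "l < n" and pairs: "\<forall>t. s !! t \<in> pairs n" and attached: "all_attached n (run k l s T)"
  shows "in_Tk n k (out (run k l s T))" and "stable_from n (run k l s) (out (run k l s T)) T"
proof -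
  have exec: "execution n k l (run k l s)" using pairs unfolding execution_def by auto
  show "in_Tk n k (out (run k l s T))"
    by (rule tree_shaped_all_attached_in_Tk[OF execution_tree_shaped[OF l exec] attached])
  show "stable_from n (run k l s) (out (run k l s T)) T"
    unfolding stable_from_def
  proof (intro allI impI)
    fix t assume "T \<le> t"
    then show "iso n (out (run k l s t)) (out (run k l s T))"
      using run_all_attached_const[OF pairs attached \<open>T \<le> t\<close>] iso_refl by simp
  qed
qed

text \<open>After \<open>O(n log n)\<close> interactions all nodes are attached with high probability, and an
  attached configuration is a tree in \<open>T_k\<close> that no longer changes.\<close>
lemma fast_stabilisation:
  assumes k: "k \<ge> 2" and a: "a > 0" and n: "n \<ge> 3" and l: "l < n"
  shows "measure (sched n) {s \<in> space (sched n). \<exists>T::nat. \<exists>G.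
      real T \<le> 8 * (a + 3) * real n * ln (real n) \<and> in_Tk n k G \<and> stable_from n (run k l s) G T}
    \<ge> 1 - real n powr (- a)"
proof -
  define B where "B = 8 * (a + 3) * real n * ln (real n)"
  define T where "T = nat \<lfloor>B\<rfloor>"
  interpret prob_space "sched n"
    unfolding sched_def by (rule prob_space.prob_space_stream_space[OF prob_space_measure_pmf])
  have n2: "n \<ge> 2" using n by simp
  have B: "B \<ge> 0" unfolding B_def using n a by simp
  define E where "E = {s \<in> space (sched n). \<exists>T::nat. \<exists>G.
      real T \<le> B \<and> in_Tk n k G \<and> stable_from n (run k l s) G T}"
  define D where "D = {s \<in> space (sched n). all_attached n (run k l s T)}"
  have E: "E \<in> sets (sched n)" unfolding E_def by (rule sets_stabilisation_event)
  have D: "D \<in> sets (sched n)"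
    unfolding D_def run_eq_run_from sched_def using measurable_run_from[unfolded pred_def] .
  have "AE s in sched n. s \<in> D \<longrightarrow> s \<in> E"
    using AE_sched_pairs[OF n2]
  proof (rule eventually_mono, intro impI)
    fix s assume pairs: "\<forall>t. s !! t \<in> pairs n" and "s \<in> D"
    then have attached: "all_attached n (run k l s T)" and s: "s \<in> space (sched n)"
      unfolding D_def by auto
    have "in_Tk n k (out (run k l s T))" "stable_from n (run k l s) (out (run k l s T)) T"
      using run_all_attached_stable[OF l pairs attached] by blast+
    moreover have "real T \<le> B" unfolding T_def using B by linarith
    ultimately show "s \<in> E" unfolding E_def using s by blast
  qed
  then have "emeasure (sched n) D \<le> emeasure (sched n) E" by (rule emeasure_mono_AE[OF _ E])
  then have "measure (sched n) D \<le> measure (sched n) E" by (simp add: emeasure_eq_measure)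
  moreover have "space (sched n) - D = {s \<in> space (sched n). \<not> all_attached n (run k l s T)}"
    unfolding D_def by blast
  then have "measure (sched n) D = 1 - measure (sched n) {s \<in> space (sched n). \<not> all_attached n (run k l s T)}"
    using prob_compl[OF D] by simp
  moreover have "(1 - contraction n) ^ T * (exp 1 * real n) \<le> real n powr (- a)"
    unfolding T_def B_def by (rule contraction_power_le[OF a n])
  ultimately show ?thesis
    using prob_not_all_attached_le[OF k n2 l, of T] unfolding E_def B_def by linarith
qed

lemma stabilisation_whp:
  assumes "k \<ge> 2" and "a > 0"
  shows "\<exists>c::real. \<exists>N::nat. \<forall>n\<ge>N. n \<ge> 2 \<longrightarrow> (\<forall>l<n.
    measure (sched n) {s \<in> space (sched n). \<exists>T::nat. \<exists>G.
      real T \<le> c * real n * ln (real n) \<and> in_Tk n k G \<and> stable_from n (run k l s) G T}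
    \<ge> 1 - real n powr (- a))"
  by (intro exI[of _ "8 * (a + 3)"] exI[of _ 3] allI impI fast_stabilisation[OF assms]) assumption+

theorem theorem2:
  fixes k :: nat
  assumes "k \<ge> 2"
  shows "(\<forall>n\<ge>2. \<forall>l<n.
            (\<forall>C. execution n k l C \<and> fair n k C \<longrightarrow>
                 (\<exists>G. in_Tk n k G \<and> stabilises_to n C G)) \<and>
            (\<forall>G. in_Tk n k G \<longrightarrow>
                 (\<exists>C. execution n k l C \<and> stabilises_to n C G)))
       \<and> (\<forall>a::real. a > 0 \<longrightarrow>
            (\<exists>c::real. \<exists>N::nat. \<forall>n\<ge>N. n \<ge> 2 \<longrightarrow> (\<forall>l<n.
               measure (sched n)
                 {s \<in> space (sched n). \<exists>T::nat. \<exists>G.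
                     real T \<le> c * real n * ln (real n) \<and> in_Tk n k G \<and>
                     stable_from n (run k l s) G T}
               \<ge> 1 - real n powr (- a))))"
proof (intro conjI allI impI)
  fix n l C assume "2 \<le> n" "l < n" "execution n k l C \<and> fair n k C"
  then show "\<exists>G. in_Tk n k G \<and> stabilises_to n C G" using fair_execution_stabilises[OF assms] by blast
next
  fix n l G assume "2 \<le> n" "l < n" "in_Tk n k G"
  then show "\<exists>C. execution n k l C \<and> stabilises_to n C G" using in_Tk_constructible by blast
qed (rule stabilisation_whp[OF assms])

end
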